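(* Let $E=[t]_\times R$ where $t\in\mathbb R^3$ and $R\in\mathrm{SO}(3)$ is a rotation about a vector $u$ (i.e. $R$ is given by a unit quaternion $[\sigma\ u^\top]$), and suppose $u^\top t=0$. Let $\tau'=\operatorname{tr}R+1$ and $A=E-E^\top$, with entries $E_{ij}$, $A_{ij}$. Then for every triple $(i,j,k)$ of pairwise distinct indices in $\{1,2,3\}$, $$\big(A_{ki}E_{ii}E_{jk}+A_{ij}E_{kk}E_{ii}-A_{jk}(E_{kk}E_{ik}-E_{ki}E_{jj}+E_{kj}E_{ji}+E_{ij}E_{jk})\big)\tau'+2A_{ij}A_{jk}^2=0,$$ and moreover $$\big(A_{12}A_{23}E_{31}+A_{12}A_{31}E_{32}+A_{12}E_{12}E_{33}+A_{23}A_{31}E_{21}+A_{23}E_{11}E_{23}+A_{31}E_{22}E_{31}\big)\tau'+2A_{12}A_{23}A_{31}=0.$$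
   Context: $[t]_\times$ is the skew-symmetric matrix with $[t]_\times b=t\times b$. A unit quaternion $[\sigma\ u^\top]$ ($\sigma^2+\|u\|^2=1$) determines the rotation $R=2(uu^\top-\sigma[u]_\times)+(\sigma^2-\|u\|^2)I$, whose rotation axis is along $u$ (when $u\neq0$) and $\operatorname{tr}R=4\sigma^2-1$. *)

theory Defs
  imports "HOL-Analysis.Analysis" "HOL-Analysis.Cross3"
begin

definition skew :: "real^3 \<Rightarrow> real^3^3" where
  "skew t = matrix (\<lambda>b. cross3 t b)"

definition quat_rot :: "real \<Rightarrow> real^3 \<Rightarrow> real^3^3" where
  "quat_rot \<sigma> u = (\<chi> i j. 2 * (u$i * u$j - \<sigma> * (skew u)$i$j)
       + (if i = j then \<sigma>\<^sup>2 - (norm u)\<^sup>2 else 0))"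

definition trace3 :: "real^3^3 \<Rightarrow> real" where
  "trace3 M = (\<Sum>i\<in>UNIV. M$i$i)"

end

theory Submission
  imports Defs
begin

text \<open>The antisymmetric part of \<open>E = [t]\<^sub>\<times>R\<close> is again a cross-product matrix: for every
  matrix \<open>M\<close>, \<open>[t]\<^sub>\<times>M + M\<^sup>T[t]\<^sub>\<times> = [(tr M) t - M t]\<^sub>\<times>\<close>, and for the quaternion rotation with
  \<open>u \<bottom> t\<close> this gives \<open>A = [2\<sigma>(\<sigma> t + u \<times> t)]\<^sub>\<times>\<close>, while \<open>\<tau>' = 4\<sigma>\<^sup>2\<close>. With these closed forms
  both identities are polynomial identities in \<open>\<sigma>, u, t\<close> modulo \<open>\<sigma>\<^sup>2 + |u|\<^sup>2 = 1\<close> and \<open>u \<bullet> t = 0\<close>.\<close>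

lemma skew_nth:
  "skew t $ i $ j = (if i = 1 then (if j = 1 then 0 else if j = 2 then - t$3 else t$2)
   else if i = 2 then (if j = 1 then t$3 else if j = 2 then 0 else - t$1)
   else (if j = 1 then - t$2 else if j = 2 then t$1 else 0))"
  unfolding skew_def matrix_def
  using exhaust_3[of i] exhaust_3[of j]
  by (auto simp: cross3_def axis_def)

lemma transpose_skew: "transpose (skew t) = - skew t"
  by (simp add: vec_eq_iff forall_3 transpose_def skew_nth)

lemma transpose_skew_mult: "transpose (skew t ** M) = - (transpose M ** skew t)"
  unfolding matrix_transpose_mul transpose_skew
  by (simp add: vec_eq_iff matrix_matrix_mult_def sum_negf)

lemma skew_mult_add_transpose_mult_skew:
  "skew t ** M + transpose M ** skew t = skew (trace3 M *\<^sub>R t - M *v t)"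
  by (simp add: vec_eq_iff forall_3 skew_nth matrix_matrix_mult_def transpose_def trace3_def
      matrix_vector_mult_def sum_3 algebra_simps)

lemma norm_power2_vec3: "(norm (u::real^3))\<^sup>2 = u$1^2 + u$2^2 + u$3^2"
  unfolding power2_norm_eq_inner by (simp add: inner_vec_def sum_3 power2_eq_square)

lemma trace3_quat_rot: "trace3 (quat_rot \<sigma> u) = 3 * \<sigma>\<^sup>2 - (norm u)\<^sup>2"
  unfolding trace3_def quat_rot_def norm_power2_vec3
  by (simp add: sum_3 skew_nth power2_eq_square algebra_simps)

lemma quat_rot_mult_vec:
  "quat_rot \<sigma> u *v t
     = (2 * (u \<bullet> t)) *\<^sub>R u - (2 * \<sigma>) *\<^sub>R cross3 u t + (\<sigma>\<^sup>2 - (norm u)\<^sup>2) *\<^sub>R t"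
  by (simp add: vec_eq_iff forall_3 quat_rot_def norm_power2_vec3 matrix_vector_mult_def sum_3
      skew_nth inner_vec_def cross3_simps power2_eq_square algebra_simps)

lemma skew_mult_quat_rot_minus_transpose:
  assumes "u \<bullet> t = 0"
  shows "skew t ** quat_rot \<sigma> u - transpose (skew t ** quat_rot \<sigma> u)
           = skew ((2 * \<sigma>) *\<^sub>R (\<sigma> *\<^sub>R t + cross3 u t))"
proof -
  have "skew t ** quat_rot \<sigma> u - transpose (skew t ** quat_rot \<sigma> u)
          = skew t ** quat_rot \<sigma> u + transpose (quat_rot \<sigma> u) ** skew t"
    by (simp add: transpose_skew_mult)
  also have "\<dots> = skew ((2 * \<sigma>) *\<^sub>R (\<sigma> *\<^sub>R t + cross3 u t))"
    unfolding skew_mult_add_transpose_mult_skew trace3_quat_rot quat_rot_mult_vec assms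
    by (intro arg_cong[where f = skew]) (simp add: vec_eq_iff algebra_simps power2_eq_square)
  finally show ?thesis .
qed

theorem mainTheorem5:
  fixes t u :: "real^3" and \<sigma> :: real
  assumes unit: "\<sigma>\<^sup>2 + (norm u)\<^sup>2 = 1"
    and perp: "u \<bullet> t = 0"
  defines "R \<equiv> quat_rot \<sigma> u"
  defines "E \<equiv> skew t ** R"
  defines "\<tau> \<equiv> trace3 R + 1"
  defines "A \<equiv> E - transpose E"
  shows "(\<forall>i j k :: 3. i \<noteq> j \<and> j \<noteq> k \<and> i \<noteq> k \<longrightarrow>
           (A$k$i * E$i$i * E$j$k + A$i$j * E$k$k * E$i$i
            - A$j$k * (E$k$k * E$i$k - E$k$i * E$j$j + E$k$j * E$j$i + E$i$j * E$j$k)) * \<tau>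
           + 2 * A$i$j * (A$j$k)\<^sup>2 = 0)
       \<and> (A$1$2 * A$2$3 * E$3$1 + A$1$2 * A$3$1 * E$3$2 + A$1$2 * E$1$2 * E$3$3
          + A$2$3 * A$3$1 * E$2$1 + A$2$3 * E$1$1 * E$2$3 + A$3$1 * E$2$2 * E$3$1) * \<tau>
         + 2 * A$1$2 * A$2$3 * A$3$1 = 0"
proof -
  have \<tau>: "\<tau> = 4 * \<sigma>\<^sup>2"
    using unit by (simp add: \<tau>_def R_def trace3_quat_rot)
  have A: "A $ i $ j = skew ((2 * \<sigma>) *\<^sub>R (\<sigma> *\<^sub>R t + cross3 u t)) $ i $ j" for i j
    using skew_mult_quat_rot_minus_transpose[OF perp] by (simp add: A_def E_def R_def)
  have E: "E $ i $ j = (\<Sum>k\<in>UNIV. skew t $ i $ k * R $ k $ j)" for i j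
    by (simp add: E_def matrix_matrix_mult_def)
  have perp3: "u$1 * t$1 + u$2 * t$2 + u$3 * t$3 = 0"
    using perp by (simp add: inner_vec_def sum_3)
  have unit3: "\<sigma>\<^sup>2 + (u$1^2 + u$2^2 + u$3^2) = 1"
    using unit by (simp add: norm_power2_vec3)
  show ?thesis
    unfolding forall_3
    apply (simp only: \<tau> A E sum_3 skew_nth R_def quat_rot_def norm_power2_vec3)
    apply (simp add: cross3_def)
    using perp3 unit3
    apply (intro conjI impI; algebra)
    done
qed

end
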